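(* Let $n\ge5$ be odd and write $c_j=\cos(2\pi j/n)$. Then $$Su_4:=\frac32\sum_{j=\lceil n/4\rceil}^{(n-1)/2}\ \sum_{k=\lceil n/4\rceil}^{(n-1)/2}\frac{1}{|c_j-c_k+1|}\ \le\ \frac{3}{32}\,n^2\ln n.$$
   Context: $\ln$ denotes the natural logarithm. *)

theory Defs
  imports Complex_Main
begin

definition cc :: "nat \<Rightarrow> nat \<Rightarrow> real" where
  "cc n j = cos (2 * pi * real j / real n)"

end

theory Submission
  imports Defs "HOL-Analysis.Analysis"
begin

text \<open>For \<open>j, k\<close> in the summation range, \<open>1 + c\<^sub>j \<ge> 4 (n - 2 j)\<^sup>2 / n\<^sup>2\<close> (the chord of
  \<open>1 - cos\<close> on \<open>[0, pi/2]\<close>) and \<open>-c\<^sub>k \<ge> (4 k - n) / n\<close> (Jordan's inequality), so each summand is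
  at most \<open>1 / (P\<^sub>j + Q\<^sub>k)\<close> with both minorants explicit. For fixed \<open>j\<close> the \<open>Q\<^sub>k\<close> form an
  arithmetic progression of step \<open>4 / n\<close>, so the row sum is bounded by a logarithm, about
  \<open>(n / 8) ln n\<close>; what is left of the rows are terms \<open>n\<^sup>2 / (4 (n - 2 j)\<^sup>2 + c n)\<close>, whose sum over
  \<open>j\<close> is controlled by an \<open>arctan\<close> primitive and is only \<open>O(n sqrt n)\<close>. With numerical constants
  this gives the bound for \<open>n \<ge> 21\<close> (\<open>n \<ge> 31\<close> if \<open>n \<equiv> 3 mod 4\<close>); the smaller \<open>n\<close> are
  checked numerically.\<close>

lemma pi_ge_3_1415: "(31415/10000::real) \<le> pi"
  using pi_approx(1) by simp

lemma pi_le_3_1416: "pi \<le> (31416/10000::real)"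
  using pi_approx(2) by simp

lemma sin_ge_Taylor_3:
  fixes x :: real
  assumes "0 \<le> x"
  shows "x - x^3/6 \<le> sin x"
proof (cases "x = 0")
  case False
  with assms have x: "x > 0" by simp
  from Maclaurin_sin_expansion3[of 3 x] x obtain t where
    t: "0 < t" "t < x"
       "sin x = (\<Sum>m<3. sin_coeff m * x ^ m) + (sin (t + 1/2 * real 3 * pi) / fact 3) * x ^ 3"
    by auto
  have "(\<Sum>m<3. sin_coeff m * x ^ m) = x"
    by (simp add: numeral_3_eq_3 sin_coeff_def)
  moreover have "sin (t + 1/2 * real 3 * pi) = - cos t"
    using sin_periodic[of "t - pi/2"] by (simp add: sin_diff algebra_simps)
  ultimately have "sin x = x - cos t * x^3 / 6"
    using t(3) by (simp add: fact_numeral)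
  moreover have "cos t * x^3 \<le> x^3"
    using x by (simp add: mult_left_le_one_le)
  ultimately show ?thesis by (simp add: divide_right_mono)
qed simp

lemma cos_le_Taylor_4:
  fixes x :: real
  shows "cos x \<le> 1 - x^2/2 + x^4/24"
proof -
  have "cos y \<le> 1 - y^2/2 + y^4/24" if y: "y > 0" for y :: real
  proof -
    from Maclaurin_cos_expansion2[of y 4] y obtain t where
      "cos y = (\<Sum>m<4. cos_coeff m * y ^ m) + (cos (t + 1/2 * real 4 * pi) / fact 4) * y ^ 4"
      by auto
    moreover have "(\<Sum>m<4. cos_coeff m * y ^ m) = 1 - y^2/2"
      using odd_numeral[of "Num.One", where 'a=nat] by (simp add: eval_nat_numeral cos_coeff_def)
    moreover have "cos (t + 1/2 * real 4 * pi) = cos t"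
      by (simp add: cos_add)
    ultimately have "cos y = 1 - y^2/2 + cos t * y^4/24"
      by (simp add: fact_numeral)
    moreover have "cos t * y^4 \<le> y^4"
      using mult_right_mono[OF cos_le_one[of t], of "y^4"] by simp
    ultimately show ?thesis by (simp add: divide_right_mono)
  qed
  from this[of x] this[of "-x"] show ?thesis
    by (cases x "0::real" rule: linorder_cases) auto
qed

lemma sin_div_self_antimono:
  fixes x y :: real
  assumes "0 < x" "x \<le> y" "y \<le> pi/2"
  shows "sin y / y \<le> sin x / x"
proof (rule DERIV_nonpos_imp_nonincreasing[OF assms(2)])
  fix t assume t: "x \<le> t" "t \<le> y"
  with assms have t0: "t > 0" and t1: "t \<le> pi/2" by auto
  have "t * cos t \<le> sin t"
  proof (cases "t = pi/2")
    case False
    with t1 have lt: "t < pi/2" by simp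
    have c: "cos t > 0" using t0 lt by (intro cos_gt_zero_pi) auto
    have "t \<le> tan t" using abs_tan_ge[of t] tan_gt_zero[of t] t0 lt by simp
    then have "t * cos t \<le> tan t * cos t" using c by (simp add: mult_right_mono)
    then show ?thesis using c by (simp add: tan_def)
  next
    case True
    show ?thesis unfolding True by simp
  qed
  then have "(cos t * t - sin t * 1) / (t * t) \<le> 0"
    using t0 by (simp add: divide_nonpos_pos mult.commute)
  moreover have "DERIV (\<lambda>t. sin t / t) t :> (cos t * t - sin t * 1) / (t * t)"
    using t0 by (auto intro!: derivative_eq_intros)
  ultimately show "\<exists>d. DERIV (\<lambda>t. sin t / t) t :> d \<and> d \<le> 0" by blast
qed

lemma Jordan_inequality:
  fixes x :: real
  assumes "0 \<le> x" "x \<le> pi/2"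
  shows "2 * x / pi \<le> sin x"
proof (cases "x = 0")
  case False
  with assms have "x > 0" by simp
  from sin_div_self_antimono[OF this assms(2) order_refl] this show ?thesis
    by (simp add: field_simps)
qed simp

text \<open>Sharper than what Jordan's inequality gives; it comes from
  \<open>sin (y/2) / (y/2) \<ge> sin (pi/4) / (pi/4)\<close>.\<close>
lemma one_minus_cos_ge_chord:
  fixes y :: real
  assumes "0 \<le> y" "y \<le> pi/2"
  shows "4 * y^2 / pi^2 \<le> 1 - cos y"
proof (cases "y = 0")
  case False
  with assms have y: "y/2 > 0" by simp
  have "sin (pi/4) / (pi/4) \<le> sin (y/2) / (y/2)"
    using sin_div_self_antimono[of "y/2" "pi/4"] y assms by simp
  then have h: "sin (pi/4) * (y/2) \<le> sin (y/2) * (pi/4)"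
    using y by (simp add: field_simps)
  have "0 \<le> sin (pi/4) * (y/2)" using assms by (simp add: sin_45)
  with h have "(sin (pi/4) * (y/2))^2 \<le> (sin (y/2) * (pi/4))^2"
    by (simp add: power_mono)
  then have "2 * y^2 / pi^2 \<le> sin (y/2)^2"
    by (simp add: sin_45 power_mult_distrib power_divide field_simps)
  moreover have "cos y = 1 - 2 * sin (y/2)^2" using cos_double_sin[of "y/2"] by simp
  ultimately show ?thesis by simp
qed simp

lemma ln2_ge_6931: "(6931/10000::real) \<le> ln 2"
proof -
  have "(\<Sum>k<4. 2*((2-1)/(2+1))^(2*k+1) / of_nat (2*k+1)) \<le> ln (2::real)"
    using ln_approx_bounds[of 2 4] by simp
  moreover have "6931/10000 \<le> (\<Sum>k<4. 2*((2-1)/(2+1::real))^(2*k+1) / of_nat (2*k+1))"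
    by (simp add: eval_nat_numeral)
  ultimately show ?thesis by linarith
qed

lemma ln_ge_by_power_of_2:
  fixes x :: real
  assumes "x > 0"
  shows "real k * ln 2 + (1 - 2^k / x) \<le> ln x"
proof -
  have "ln (2^k / x) \<le> 2^k / x - 1" using ln_le_minus_one[of "2^k / x"] assms by simp
  then show ?thesis using assms by (simp add: ln_div ln_realpow)
qed

lemma ln_le_tangent:
  fixes x c :: real
  assumes "x > 0" "c > 0"
  shows "ln x \<le> ln c + x / c - 1"
  using ln_le_minus_one[of "x / c"] assms by (simp add: ln_div)

text \<open>The tangent of \<open>ln\<close> at \<open>sqrt N\<close>; this is where the \<open>ln N / 2\<close> per row comes from.\<close>
lemma ln_quotient_le:
  fixes a b N :: real
  assumes "0 < a" "0 < b" "b \<le> a + 1" "0 < N"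
  shows "ln (b / a) \<le> ln N / 2 - 1 + (1 + 1 / a) / sqrt N"
proof -
  have "b / a \<le> 1 + 1 / a" using assms by (simp add: field_simps)
  then have "(b / a) / sqrt N \<le> (1 + 1 / a) / sqrt N"
    using assms by (intro divide_right_mono) auto
  moreover have "ln (b / a) \<le> ln (sqrt N) + (b / a) / sqrt N - 1"
    using assms by (intro ln_le_tangent) auto
  ultimately show ?thesis using assms by (simp add: ln_sqrt)
qed

lemma sum_inverse_arith_progression_le_ln:
  fixes f :: "nat \<Rightarrow> real"
  assumes pos: "\<And>k. k0 \<le> k \<Longrightarrow> f k > 0"
    and incr: "\<And>k. f (Suc k) = f k + d" and "d > 0" and "k0 \<le> K"
  shows "(\<Sum>k\<in>{k0<..K}. 1 / f k) \<le> (ln (f K) - ln (f k0)) / d"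
  using \<open>k0 \<le> K\<close>
proof (induction K rule: dec_induct)
  case (step K)
  have "ln (f K) - ln (f (Suc K)) \<le> (f K - f (Suc K)) / f (Suc K)"
    using pos step.hyps by (intro ln_diff_le) auto
  then have "ln (f K) - ln (f (Suc K)) \<le> - d / f (Suc K)"
    by (simp add: incr)
  then have "1 / f (Suc K) \<le> (ln (f (Suc K)) - ln (f K)) / d"
    using \<open>d > 0\<close> pos[of "Suc K"] step.hyps by (simp add: field_simps)
  moreover have "{k0<..Suc K} = insert (Suc K) {k0<..K}" using step.hyps by auto
  ultimately show ?case
    using step.IH by (simp add: diff_divide_distrib)
qed simp

definition arctan_primitive :: "real \<Rightarrow> real \<Rightarrow> real" where
  "arctan_primitive M x = arctan (2 * x / sqrt M) / (2 * sqrt M)"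

lemma arctan_primitive_deriv:
  assumes "M > 0"
  shows "DERIV (arctan_primitive M) x :> 1 / (4 * x^2 + M)"
proof -
  have s: "sqrt M > 0" and sq: "(sqrt M)^2 = M" using assms by simp_all
  have "DERIV (\<lambda>x. arctan (2 * x / sqrt M) / (2 * sqrt M)) x :>
          inverse (1 + (2 * x / sqrt M)^2) * (2 / sqrt M) / (2 * sqrt M)"
    using s by (auto intro!: derivative_eq_intros)
  moreover have "1 + (2 * x / sqrt M)^2 = (4 * x^2 + M) / M"
    using assms by (simp add: power_divide power_mult_distrib sq add_divide_distrib)
  moreover have "(2 / sqrt M) / (2 * sqrt M) = 1 / (sqrt M)^2"
    using s by (simp add: power2_eq_square)
  moreover have "4 * x^2 + M > 0" using assms by (simp add: add_nonneg_pos)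
  ultimately show ?thesis unfolding arctan_primitive_def[abs_def] using assms by simp
qed

lemma inverse_quadratic_le_arctan_primitive_diff:
  assumes M: "M > 0" and a: "a \<ge> 1"
  shows "2 / (4 * a^2 + M) \<le> arctan_primitive M a - arctan_primitive M (a - 2)"
proof -
  let ?c = "1 / (4 * a^2 + M)"
  let ?h = "\<lambda>x. arctan_primitive M x - x * ?c"
  have "?h (a - 2) \<le> ?h a"
  proof (rule DERIV_nonneg_imp_nondecreasing[of "a - 2" a])
    fix x assume x: "a - 2 \<le> x" "x \<le> a"
    then have "x^2 \<le> a^2" using a by (simp add: abs_le_square_iff[symmetric])
    moreover have "0 < 4 * x^2 + M" "0 < 4 * a^2 + M"
      using M by (simp_all add: add_nonneg_pos)
    ultimately have "?c \<le> 1 / (4 * x^2 + M)"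
      by (intro divide_left_mono) auto
    moreover have "DERIV ?h x :> 1 / (4 * x^2 + M) - 1 * ?c"
      by (intro DERIV_diff arctan_primitive_deriv[OF M] DERIV_cmult_right DERIV_ident)
    ultimately show "\<exists>y. DERIV ?h x :> y \<and> y \<ge> 0" by auto
  qed simp
  moreover have "a * ?c - (a - 2) * ?c = 2 / (4 * a^2 + M)"
    by (simp add: diff_divide_distrib[symmetric])
  ultimately show ?thesis by simp
qed

lemma arctan_primitive_le: "M > 0 \<Longrightarrow> arctan_primitive M x \<le> pi / (4 * sqrt M)"
  using arctan_ubound[of "2 * x / sqrt M"] divide_right_mono[of _ "pi / 2" "2 * sqrt M"]
  unfolding arctan_primitive_def by fastforce

lemma arctan_primitive_one_ge:
  assumes "M > 4"
  shows "1 / M - 4 / (3 * M^2) \<le> arctan_primitive M 1"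
proof -
  have "sqrt 4 < sqrt M" using assms real_sqrt_less_iff by blast
  then have s: "sqrt M > 2" by simp
  define v where "v = 2 / sqrt M"
  have "0 \<le> v" "v < 1" unfolding v_def using s assms by (simp_all add: divide_less_eq)
  from arctan_lower_bound[OF this, of 1] have "v - v^3/3 \<le> arctan v"
    by (simp add: numeral_2_eq_2 power3_eq_cube)
  then have "(v - v^3/3) / (2 * sqrt M) \<le> arctan_primitive M 1"
    using assms unfolding arctan_primitive_def v_def by (intro divide_right_mono) auto
  moreover have "v / (2 * sqrt M) = 2 / (2 * (sqrt M)^2)"
    unfolding v_def by (simp add: power2_eq_square)
  moreover have "v^3 / 3 / (2 * sqrt M) = 8 / (6 * ((sqrt M)^2)^2)"
    unfolding v_def by (simp add: power_divide power2_eq_square power3_eq_cube)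
  ultimately show ?thesis using assms by (simp add: diff_divide_distrib)
qed

text \<open>The sum runs over the odd values \<open>n - 2 j = 1, 3, 5, \<dots>\<close>; the term for \<open>1\<close> is
  kept apart, the others are bounded by increments of \<open>arctan_primitive M\<close>.\<close>
lemma sum_inverse_odd_squares_le:
  fixes n :: nat and M :: real
  assumes M: "M > 4" and "L \<le> H" and nH: "real n - 2 * real H = 1"
  shows "(\<Sum>j\<in>{L..H}. 1 / (4 * (real n - 2 * real j)^2 + M))
           \<le> 1/(2*M) + 2/(3*M^2) + pi / (8 * sqrt M)"
proof -
  define g where "g j = real n - 2 * real j" for j
  define F where "F = arctan_primitive M"
  have M0: "M > 0" using M by simp
  have gH: "g H = 1" using nH unfolding g_def by simp
  have "(\<Sum>j\<in>{L..<H}. 1 / (4 * (g j)^2 + M)) \<le> (\<Sum>j\<in>{L..<H}. (F (g j) - F (g (Suc j))) / 2)"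
  proof (rule sum_mono)
    fix j assume "j \<in> {L..<H}"
    then have "g j \<ge> 1" and "g j - 2 = g (Suc j)" using nH unfolding g_def by auto
    then show "1 / (4 * (g j)^2 + M) \<le> (F (g j) - F (g (Suc j))) / 2"
      using inverse_quadratic_le_arctan_primitive_diff[OF M0, of "g j"] unfolding F_def by simp
  qed
  also have "\<dots> = (\<Sum>j\<in>{L..<H}. F (g j) - F (g (Suc j))) / 2"
    by (simp add: sum_divide_distrib)
  also have "\<dots> = (F (g L) - F 1) / 2"
    using sum_Suc_diff'[OF \<open>L \<le> H\<close>, of "\<lambda>j. - F (g j)"] gH by simp
  also have "\<dots> \<le> (pi / (4 * sqrt M) - (1 / M - 4 / (3 * M^2))) / 2"
    using arctan_primitive_le[OF M0] arctan_primitive_one_ge[OF M] unfolding F_def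
    by (intro divide_right_mono diff_mono) auto
  finally have tail: "(\<Sum>j\<in>{L..<H}. 1 / (4 * (g j)^2 + M))
      \<le> (pi / (4 * sqrt M) - (1 / M - 4 / (3 * M^2))) / 2" .
  have "{L..H} = insert H {L..<H}" using \<open>L \<le> H\<close> by auto
  then have "(\<Sum>j\<in>{L..H}. 1 / (4 * (g j)^2 + M))
      \<le> 1 / (4 + M) + (pi / (4 * sqrt M) - (1 / M - 4 / (3 * M^2))) / 2"
    using tail gH by simp
  also have "\<dots> = 1 / (4 + M) - 1/(2*M) + 2/(3*M^2) + pi / (8 * sqrt M)"
    by (simp add: diff_divide_distrib)
  also have "\<dots> \<le> 1/(2*M) + 2/(3*M^2) + pi / (8 * sqrt M)"
    using M0 divide_left_mono[of M "4 + M" 1] by simp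
  finally show ?thesis unfolding g_def .
qed

section \<open>Minorants of the summands\<close>

definition one_plus_cc_minorant :: "nat \<Rightarrow> nat \<Rightarrow> real" where
  "one_plus_cc_minorant n j = 4 * (real n - 2 * real j)^2 / (real n)^2"

text \<open>At \<open>4 k = n + 1\<close> Jordan's bound \<open>(4 k - n) / n\<close> is only \<open>1 / n\<close>; the cubic
  Taylor bound gives \<open>3 / (2 n)\<close> there instead.\<close>
definition neg_cc_minorant :: "nat \<Rightarrow> nat \<Rightarrow> real" where
  "neg_cc_minorant n k =
     (if 4 * k = n + 1 then 3 / (2 * real n) else (4 * real k - real n) / real n)"

lemma one_plus_cc_minorant_nonneg: "0 \<le> one_plus_cc_minorant n j"
  unfolding one_plus_cc_minorant_def by simp

lemma summation_range_bounds:
  assumes "nat \<lceil>real n / 4\<rceil> \<le> j" "j \<le> (n - 1) div 2" "odd n"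
  shows "n < 4 * j" "2 * j + 1 \<le> n"
proof -
  have "real n / 4 \<le> real j" using assms(1) by (simp add: nat_le_iff ceiling_le_iff)
  moreover have "n \<noteq> 4 * j" using assms(3) by auto
  ultimately show "n < 4 * j" by linarith
  show "2 * j + 1 \<le> n" using assms(2,3) by (auto elim!: oddE)
qed

lemma one_plus_cc_minorant_le:
  assumes "0 < n" "2 * j \<le> n" "n \<le> 4 * j"
  shows "one_plus_cc_minorant n j \<le> 1 + cc n j"
proof -
  have n0: "real n > 0" using assms by simp
  define y where "y = pi * (real n - 2 * real j) / real n"
  have "2 * pi * real j / real n = pi - y" using n0 unfolding y_def by (simp add: field_simps)
  then have "1 + cc n j = 1 - cos y" unfolding cc_def by simp
  moreover have "0 \<le> y" unfolding y_def using assms by simp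
  moreover have "y \<le> pi / 2" unfolding y_def using assms n0 by (simp add: field_simps)
  moreover have "4 * y^2 / pi^2 = one_plus_cc_minorant n j"
    unfolding y_def one_plus_cc_minorant_def by (simp add: power_divide power_mult_distrib)
  ultimately show ?thesis using one_minus_cos_ge_chord by metis
qed

lemma three_div_le_Taylor_3_at_pi_div:
  fixes x :: real
  assumes "5 \<le> x"
  shows "3 / (2 * x) \<le> pi / (2 * x) - (pi / (2 * x))^3 / 6"
proof -
  have x0: "x > 0" using assms by simp
  have "pi^3 \<le> 4^3" using pi_less_4 by (intro power_mono) auto
  moreover have "25 * (24 * pi - 72) \<le> x^2 * (24 * pi - 72)"
    using pi_ge_3_1415 power_mono[OF assms, of 2] by (intro mult_right_mono) auto
  moreover have "64 \<le> 25 * (24 * pi - 72)" using pi_ge_3_1415 by simp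
  ultimately have "pi^3 \<le> (24 * x^2) * (pi - 3)"
    by (simp add: algebra_simps)
  then have "pi^3 / (24 * x^2) \<le> pi - 3"
    using x0 by (simp add: divide_le_eq mult.commute)
  then have "3 / (2 * x) \<le> (pi - pi^3 / (24 * x^2)) / (2 * x)"
    using x0 by (intro divide_right_mono) auto
  then show ?thesis
    by (simp add: power_divide diff_divide_distrib power_mult_distrib power3_eq_cube power2_eq_square)
qed

lemma neg_cc_minorant_le:
  assumes "n < 4 * k" "2 * k \<le> n" "n \<ge> 5"
  shows "neg_cc_minorant n k \<le> - cc n k"
proof -
  have n0: "real n > 0" using assms by simp
  define x where "x = pi * (4 * real k - real n) / (2 * real n)"
  have "2 * pi * real k / real n = x + pi/2" using n0 unfolding x_def by (simp add: field_simps)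
  then have c: "- cc n k = sin x" unfolding cc_def by (simp add: cos_add)
  have x0: "0 \<le> x" unfolding x_def using assms by simp
  show ?thesis
  proof (cases "4 * k = n + 1")
    case False
    have "x \<le> pi / 2" unfolding x_def using assms n0 by (simp add: field_simps)
    moreover have "2 * x / pi = (4 * real k - real n) / real n"
      unfolding x_def using n0 by (simp add: field_simps)
    ultimately show ?thesis
      using Jordan_inequality[OF x0] c False unfolding neg_cc_minorant_def by simp
  next
    case True
    then have "4 * real k = real n + 1" by (metis of_nat_1 of_nat_add of_nat_mult of_nat_numeral)
    then have "x = pi / (2 * real n)" unfolding x_def by simp
    then show ?thesis
      using three_div_le_Taylor_3_at_pi_div[of "real n"] assms sin_ge_Taylor_3[OF x0] c True
      unfolding neg_cc_minorant_def by fastforce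
  qed
qed

lemma neg_cc_minorant_pos: "0 < n \<Longrightarrow> n < 4 * k \<Longrightarrow> 0 < neg_cc_minorant n k"
  unfolding neg_cc_minorant_def by (auto simp: of_nat_less_iff[symmetric])

lemma inverse_gap_le_inverse_minorants:
  assumes "n \<ge> 5" "odd n"
    "nat \<lceil>real n / 4\<rceil> \<le> j" "j \<le> (n - 1) div 2"
    "nat \<lceil>real n / 4\<rceil> \<le> k" "k \<le> (n - 1) div 2"
  shows "1 / \<bar>cc n j - cc n k + 1\<bar> \<le> 1 / (one_plus_cc_minorant n j + neg_cc_minorant n k)"
proof (rule divide_left_mono)
  note j = summation_range_bounds[OF assms(3,4,2)]
  note k = summation_range_bounds[OF assms(5,6,2)]
  have "one_plus_cc_minorant n j \<le> 1 + cc n j" using j by (intro one_plus_cc_minorant_le) auto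
  moreover have "neg_cc_minorant n k \<le> - cc n k" using k assms(1) by (intro neg_cc_minorant_le) auto
  ultimately show "one_plus_cc_minorant n j + neg_cc_minorant n k \<le> \<bar>cc n j - cc n k + 1\<bar>"
    by linarith
  have "0 < one_plus_cc_minorant n j + neg_cc_minorant n k"
    using neg_cc_minorant_pos[OF _ k(1)] assms(1) one_plus_cc_minorant_nonneg[of n j] by linarith
  then show "0 < \<bar>cc n j - cc n k + 1\<bar> * (one_plus_cc_minorant n j + neg_cc_minorant n k)"
    using \<open>one_plus_cc_minorant n j + neg_cc_minorant n k \<le> \<bar>cc n j - cc n k + 1\<bar>\<close> by simp
qed simp

section \<open>Row sums\<close>

lemma sum_inverse_progression_tail_le:
  fixes P :: real and n k0 K :: nat
  assumes P: "P \<ge> 0" and "k0 \<le> K" and "n < 4 * k0" and K: "4 * K + 2 = 2 * n"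
  shows "(\<Sum>k\<in>{k0<..K}. 1 / (P + (4 * real k - real n) / real n))
         \<le> sqrt (real n) / 4 * (1 / (P + (4 * real k0 - real n) / real n))
            + real n / 4 * (ln (real n) / 2 - 1 + 1 / sqrt (real n))"
proof -
  define N where "N = real n"
  define f where "f k = P + (4 * real k - N) / N" for k
  have N0: "N > 0" using K unfolding N_def by simp
  have fpos: "f k > 0" if "k0 \<le> k" for k
  proof -
    have "N < 4 * real k" using \<open>n < 4 * k0\<close> that unfolding N_def by linarith
    then show ?thesis unfolding f_def using P N0 by (simp add: add_nonneg_pos)
  qed
  have "(4 * real K - 4 * real k0) / N \<le> 1"
    using K N0 \<open>n < 4 * k0\<close> unfolding N_def by (simp add: divide_le_eq)
  moreover have "f K = f k0 + (4 * real K - 4 * real k0) / N"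
    unfolding f_def using N0 by (simp add: field_simps)
  ultimately have fK: "f K \<le> f k0 + 1" by linarith
  have "(\<Sum>k\<in>{k0<..K}. 1 / f k) \<le> (ln (f K) - ln (f k0)) / (4 / N)"
    using N0 fpos \<open>k0 \<le> K\<close>
    by (intro sum_inverse_arith_progression_le_ln) (auto simp: f_def field_simps)
  also have "\<dots> = N / 4 * ln (f K / f k0)"
    using fpos[of k0] fpos[of K] \<open>k0 \<le> K\<close> by (simp add: ln_div)
  also have "\<dots> \<le> N / 4 * (ln N / 2 - 1 + (1 + 1 / f k0) / sqrt N)"
    using fpos[of k0] fpos[of K] \<open>k0 \<le> K\<close> fK N0 by (intro mult_left_mono ln_quotient_le) auto
  also have "\<dots> = sqrt N / 4 * (1 / f k0) + N / 4 * (ln N / 2 - 1 + 1 / sqrt N)"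
    using N0 by (simp add: field_simps real_sqrt_mult_self)
  finally show ?thesis unfolding f_def N_def .
qed

lemma sum_inverse_plus_neg_cc_minorant_one_mod_four:
  fixes t n :: nat and P :: real
  assumes "t \<ge> 1" and n: "n = 4 * t + 1" and "P \<ge> 0"
  shows "(\<Sum>k\<in>{t+1..2*t}. 1 / (P + neg_cc_minorant n k))
     \<le> (1 + sqrt (real n) / 4) * (1 / (P + 3 / real n))
        + real n / 4 * (ln (real n) / 2 - 1 + 1 / sqrt (real n))"
proof -
  have r1: "4 * real (t+1) - real n = 3" unfolding n by simp
  have "(\<Sum>k\<in>{t+1<..2*t}. 1 / (P + neg_cc_minorant n k))
      = (\<Sum>k\<in>{t+1<..2*t}. 1 / (P + (4 * real k - real n) / real n))"
    unfolding n neg_cc_minorant_def by (intro sum.cong) auto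
  moreover have "\<dots> \<le> sqrt (real n) / 4 * (1 / (P + (4 * real (t+1) - real n) / real n))
      + real n / 4 * (ln (real n) / 2 - 1 + 1 / sqrt (real n))"
    using assms by (intro sum_inverse_progression_tail_le) auto
  moreover have "{t+1..2*t} = insert (t+1) {t+1<..2*t}" using assms(1) by auto
  ultimately have "(\<Sum>k\<in>{t+1..2*t}. 1 / (P + neg_cc_minorant n k))
     \<le> 1 / (P + 3 / real n) + sqrt (real n) / 4 * (1 / (P + 3 / real n))
        + real n / 4 * (ln (real n) / 2 - 1 + 1 / sqrt (real n))"
    using r1 by (simp add: neg_cc_minorant_def n)
  then show ?thesis by (simp only: distrib_right mult_1)
qed

text \<open>The logarithmic tail starts after the exceptional term, so that the weight \<open>sqrt n / 4\<close>
  falls on \<open>1 / (P + 5 / n)\<close> rather than on \<open>1 / (P + 3 / (2 n))\<close>.\<close>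
lemma sum_inverse_plus_neg_cc_minorant_three_mod_four:
  fixes t n :: nat and P :: real
  assumes "t \<ge> 1" and n: "n = 4 * t + 3" and "P \<ge> 0"
  shows "(\<Sum>k\<in>{t+1..2*t+1}. 1 / (P + neg_cc_minorant n k))
     \<le> 1 / (P + (3/2) / real n) + (1 + sqrt (real n) / 4) * (1 / (P + 5 / real n))
        + real n / 4 * (ln (real n) / 2 - 1 + 1 / sqrt (real n))"
proof -
  have r2: "4 * real (t+2) - real n = 5" unfolding n by simp
  have "(\<Sum>k\<in>{t+2<..2*t+1}. 1 / (P + neg_cc_minorant n k))
      = (\<Sum>k\<in>{t+2<..2*t+1}. 1 / (P + (4 * real k - real n) / real n))"
    unfolding n neg_cc_minorant_def by (intro sum.cong) auto
  also have "\<dots> \<le> sqrt (real n) / 4 * (1 / (P + (4 * real (t+2) - real n) / real n))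
      + real n / 4 * (ln (real n) / 2 - 1 + 1 / sqrt (real n))"
    using assms by (intro sum_inverse_progression_tail_le) auto
  moreover have "{t+1..2*t+1} = insert (t+1) (insert (t+2) {t+2<..2*t+1})"
    using assms(1) by auto
  ultimately have "(\<Sum>k\<in>{t+1..2*t+1}. 1 / (P + neg_cc_minorant n k))
     \<le> 1 / (P + (3/2) / real n) + 1 / (P + 5 / real n) + sqrt (real n) / 4 * (1 / (P + 5 / real n))
        + real n / 4 * (ln (real n) / 2 - 1 + 1 / sqrt (real n))"
    using r2 by (simp add: neg_cc_minorant_def n)
  then show ?thesis by (simp only: distrib_right mult_1 add.assoc)
qed

section \<open>The double sum for large \<open>n\<close>\<close>

lemma pi_div_sqrt_le:
  fixes N c r \<kappa> :: real
  assumes N: "N > 0" and r: "r > 0" "r^2 \<le> c" and \<kappa>: "31416/10000 \<le> 8 * r * \<kappa>"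
  shows "pi / (8 * sqrt (c * N)) \<le> \<kappa> / sqrt N"
proof -
  have "r \<le> sqrt c" using r by (simp add: real_le_rsqrt)
  then have A: "8 * r * sqrt N \<le> 8 * sqrt (c * N)"
    using N by (simp add: real_sqrt_mult)
  have B: "0 < 8 * r * sqrt N" using r N by simp
  with A have "0 < sqrt (c * N)" by linarith
  have "pi / (8 * sqrt (c * N)) \<le> pi / (8 * r * sqrt N)"
    using A B \<open>0 < sqrt (c * N)\<close> r(1) N divide_left_mono[of "8 * r * sqrt N" "8 * sqrt (c * N)" pi]
    by (simp add: mult_pos_pos)
  also have "\<dots> \<le> (8 * r * \<kappa>) / (8 * r * sqrt N)"
    using pi_le_3_1416 \<kappa> B by (intro divide_right_mono) auto
  also have "\<dots> = \<kappa> / sqrt N" using r by simp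
  finally show ?thesis .
qed

lemma sum_inverse_one_plus_cc_minorant_plus_le:
  fixes n L H :: nat and c r \<kappa> :: real
  assumes cn: "4 < c * real n" and "L \<le> H" and "real n - 2 * real H = 1"
    and "r > 0" "r^2 \<le> c" "31416/10000 \<le> 8 * r * \<kappa>"
  shows "(\<Sum>j\<in>{L..H}. 1 / (one_plus_cc_minorant n j + c / real n))
           \<le> real n / (2 * c) + 2 / (3 * c^2) + \<kappa> * real n * sqrt (real n)"
proof -
  define N where "N = real n"
  have "r^2 > 0" using \<open>r > 0\<close> by simp
  then have c0: "c > 0" using \<open>r^2 \<le> c\<close> by linarith
  then have N0: "N > 0" using cn unfolding N_def by (cases "n = 0") auto
  have "1 / (one_plus_cc_minorant n j + c / N) = N^2 * (1 / (4 * (N - 2 * real j)^2 + c * N))"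
    for j
  proof -
    have "4 * (N - 2 * real j)^2 + c * N > 0" using N0 c0 by (simp add: add_nonneg_pos)
    moreover have "one_plus_cc_minorant n j + c / N = (4 * (N - 2 * real j)^2 + c * N) / N^2"
      using N0 unfolding one_plus_cc_minorant_def N_def by (simp add: field_simps power2_eq_square)
    ultimately show ?thesis by simp
  qed
  then have "(\<Sum>j\<in>{L..H}. 1 / (one_plus_cc_minorant n j + c / N))
      = N^2 * (\<Sum>j\<in>{L..H}. 1 / (4 * (N - 2 * real j)^2 + c * N))"
    by (simp add: sum_distrib_left)
  also have "\<dots> \<le> N^2 * (1 / (2 * (c * N)) + 2 / (3 * (c * N)^2) + pi / (8 * sqrt (c * N)))"
    using assms unfolding N_def by (intro mult_left_mono sum_inverse_odd_squares_le) auto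
  also have "\<dots> \<le> N^2 * (1 / (2 * (c * N)) + 2 / (3 * (c * N)^2) + \<kappa> / sqrt N)"
    using assms N0 by (intro mult_left_mono add_left_mono pi_div_sqrt_le) auto
  also have "\<dots> = N / (2 * c) + 2 / (3 * c^2) + \<kappa> * N * sqrt N"
  proof -
    have "N^2 * (1 / (2 * (c * N))) = N / (2 * c)"
      using N0 by (simp add: power2_eq_square)
    moreover have "N^2 * (2 / (3 * (c * N)^2)) = 2 / (3 * c^2)"
      using N0 by (simp add: power_mult_distrib)
    moreover have "N^2 * (\<kappa> / sqrt N) = \<kappa> * N * (N / sqrt N)"
      by (simp add: power2_eq_square)
    ultimately show ?thesis
      using N0 by (simp add: distrib_left real_div_sqrt)
  qed
  finally show ?thesis unfolding N_def .
qed

lemma quartic_estimate_one_mod_four: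
  fixes N :: real
  assumes "21 \<le> N"
  shows "(1 + sqrt N/4) * (N/6 + 2/27 + 2268/10000 * N * sqrt N)
           + (N - 1)/4 * (N/4 * (ln N/2 - 1 + 1/sqrt N)) \<le> N^2 * ln N / 16"
proof -
  define s where "s = sqrt N"
  define l where "l = ln N"
  have N: "s^2 = N" using assms unfolding s_def by simp
  have "45825/10000 \<le> sqrt (21::real)" by (rule real_le_rsqrt) (simp add: power2_eq_square)
  then have s: "45825/10000 \<le> s" unfolding s_def using assms by (meson order_trans real_sqrt_le_iff)
  have "4 * ln 2 + (1 - 2^4 / N) \<le> l" using ln_ge_by_power_of_2[of N 4] assms unfolding l_def by simp
  moreover have "1 - 2^4 / N \<ge> 0" using assms by (simp add: field_simps)
  ultimately have l: "2772/1000 \<le> l" using ln2_ge_6931 by simp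
  have s0: "s > 0" using s by simp
  have "(1 + s/4) * (N/6 + 2/27 + 2268/10000 * N * s)
      = s^2/6 + 2/27 + 2268/10000 * s^3 + s^3/24 + s/54 + 567/10000 * s^4"
    unfolding N[symmetric] by (simp add: field_simps power_eq_if)
  moreover have "(N - 1)/4 * (N/4 * (l/2 - 1 + 1/s))
      = l * s^4/32 - l * s^2/32 - s^4/16 + s^2/16 + s^3/16 - s/16"
    unfolding N[symmetric] using s0 by (simp add: field_simps power_eq_if)
  moreover have "N^2 * l / 16 = l * s^4 / 16" unfolding N[symmetric] by simp
  moreover have "2772/1000 * s^4 \<le> l * s^4" "2772/1000 * s^2 \<le> l * s^2"
    using mult_right_mono[OF l, of "s^4"] mult_right_mono[OF l, of "s^2"] by simp_all
  moreover have "s^4 \<ge> 45825/10000 * s^3" "s^3 \<ge> 45825/10000 * s^2" "s^2 \<ge> 45825/10000 * s"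
    using mult_right_mono[OF s] s0 by (simp_all add: power_eq_if)
  ultimately show ?thesis unfolding s_def[symmetric] l_def[symmetric] using s by linarith
qed

lemma quartic_estimate_three_mod_four:
  fixes N :: real
  assumes "31 \<le> N"
  shows "(N/3 + 8/27 + 3208/10000 * N * sqrt N)
           + (1 + sqrt N/4) * (N/10 + 2/75 + 1757/10000 * N * sqrt N)
           + (N + 1)/4 * (N/4 * (ln N/2 - 1 + 1/sqrt N)) \<le> N^2 * ln N / 16"
proof -
  define s where "s = sqrt N"
  define l where "l = ln N"
  have N: "s^2 = N" using assms unfolding s_def by simp
  have "55677/10000 \<le> sqrt (31::real)" by (rule real_le_rsqrt) (simp add: power2_eq_square)
  then have s: "55677/10000 \<le> s" unfolding s_def using assms by (meson order_trans real_sqrt_le_iff)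
  have "5 * ln 2 + (1 - 2^5 / N) \<le> l" using ln_ge_by_power_of_2[of N 5] assms unfolding l_def by simp
  moreover have "1 - 2^5 / N \<ge> 1 - 32/31" using assms by (simp add: field_simps)
  ultimately have l: "34327/10000 \<le> l" using ln2_ge_6931 by simp
  have s0: "s > 0" using s by simp
  have "(1 + s/4) * (N/10 + 2/75 + 1757/10000 * N * s)
      = s^2/10 + 2/75 + 1757/10000 * s^3 + s^3/40 + s/150 + 1757/40000 * s^4"
    unfolding N[symmetric] by (simp add: field_simps power_eq_if)
  moreover have "(N + 1)/4 * (N/4 * (l/2 - 1 + 1/s))
      = l * s^4/32 + l * s^2/32 - s^4/16 - s^2/16 + s^3/16 + s/16"
    unfolding N[symmetric] using s0 by (simp add: field_simps power_eq_if)
  moreover have "N/3 + 8/27 + 3208/10000 * N * s = s^2/3 + 8/27 + 3208/10000 * s^3"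
    unfolding N[symmetric] by (simp add: power_eq_if)
  moreover have "N^2 * l / 16 = l * s^4 / 16" unfolding N[symmetric] by simp
  moreover have "s^2 \<ge> 1" using s by (simp add: one_le_power)
  then have "s^2 * 1 \<le> s^2 * s^2" by (intro mult_left_mono) auto
  then have "34327/10000 * (s^4 - s^2) \<le> l * (s^4 - s^2)"
    using l by (intro mult_right_mono) (auto simp: power_eq_if)
  then have "34327/10000 * s^4 - 34327/10000 * s^2 \<le> l * s^4 - l * s^2"
    by (simp add: right_diff_distrib)
  moreover have "s^4 \<ge> 55677/10000 * s^3" "s^3 \<ge> 55677/10000 * s^2" "s^2 \<ge> 55677/10000 * s"
    using mult_right_mono[OF s] s0 by (simp_all add: power_eq_if)
  ultimately show ?thesis unfolding s_def[symmetric] l_def[symmetric] using s by linarith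
qed

lemma double_sum_inverse_minorants_one_mod_four:
  fixes t n :: nat
  assumes "t \<ge> 5" and n: "n = 4 * t + 1"
  shows "(\<Sum>j\<in>{t+1..2*t}. \<Sum>k\<in>{t+1..2*t}. 1 / (one_plus_cc_minorant n j + neg_cc_minorant n k))
           \<le> (real n)^2 * ln (real n) / 16"
proof -
  define N where "N = real n"
  define s where "s = sqrt N"
  define J where "J = {t+1..2*t}"
  define W where "W j = 1 / (one_plus_cc_minorant n j + 3 / N)" for j
  define C where "C = N/4 * (ln N/2 - 1 + 1/s)"
  have N21: "N \<ge> 21" unfolding N_def n using assms by simp
  then have s0: "s > 0" unfolding s_def by simp
  have inner: "(\<Sum>k\<in>J. 1 / (one_plus_cc_minorant n j + neg_cc_minorant n k)) \<le> (1 + s/4) * W j + C"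
    for j
    using sum_inverse_plus_neg_cc_minorant_one_mod_four[OF _ n one_plus_cc_minorant_nonneg] assms
    unfolding J_def W_def C_def N_def s_def by simp
  have card_J: "real (card J) = (N - 1)/4" unfolding J_def N_def n by simp
  have outer: "(\<Sum>j\<in>J. W j) \<le> N/6 + 2/27 + 2268/10000 * N * s"
    using sum_inverse_one_plus_cc_minorant_plus_le[of 3 n "t+1" "2*t" "1732/1000" "2268/10000"] N21 n
    unfolding J_def W_def N_def s_def by (simp add: power2_eq_square)
  have "(\<Sum>j\<in>J. \<Sum>k\<in>J. 1 / (one_plus_cc_minorant n j + neg_cc_minorant n k))
      \<le> (\<Sum>j\<in>J. (1 + s/4) * W j + C)"
    by (intro sum_mono inner)
  also have "\<dots> = (1 + s/4) * (\<Sum>j\<in>J. W j) + (N - 1)/4 * C"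
    using card_J by (simp add: sum.distrib sum_distrib_left)
  also have "\<dots> \<le> (1 + s/4) * (N/6 + 2/27 + 2268/10000 * N * s) + (N - 1)/4 * C"
    using outer s0 by (intro add_right_mono mult_left_mono) auto
  also have "\<dots> \<le> N^2 * ln N / 16"
    unfolding C_def s_def by (rule quartic_estimate_one_mod_four[OF N21])
  finally show ?thesis unfolding J_def N_def .
qed

lemma double_sum_inverse_minorants_three_mod_four:
  fixes t n :: nat
  assumes "t \<ge> 7" and n: "n = 4 * t + 3"
  shows "(\<Sum>j\<in>{t+1..2*t+1}. \<Sum>k\<in>{t+1..2*t+1}. 1 / (one_plus_cc_minorant n j + neg_cc_minorant n k))
           \<le> (real n)^2 * ln (real n) / 16"
proof -
  define N where "N = real n"
  define s where "s = sqrt N"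
  define J where "J = {t+1..2*t+1}"
  define V where "V j = 1 / (one_plus_cc_minorant n j + (3/2) / N)" for j
  define W where "W j = 1 / (one_plus_cc_minorant n j + 5 / N)" for j
  define C where "C = N/4 * (ln N/2 - 1 + 1/s)"
  have N31: "N \<ge> 31" unfolding N_def n using assms by simp
  then have s0: "s > 0" unfolding s_def by simp
  have inner: "(\<Sum>k\<in>J. 1 / (one_plus_cc_minorant n j + neg_cc_minorant n k))
      \<le> V j + (1 + s/4) * W j + C" for j
    using sum_inverse_plus_neg_cc_minorant_three_mod_four[OF _ n one_plus_cc_minorant_nonneg] assms
    unfolding J_def V_def W_def C_def N_def s_def by simp
  have card_J: "real (card J) = (N + 1)/4" unfolding J_def N_def n by simp
  have outer_V: "(\<Sum>j\<in>J. V j) \<le> N/3 + 8/27 + 3208/10000 * N * s"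
    using sum_inverse_one_plus_cc_minorant_plus_le[of "3/2" n "t+1" "2*t+1" "12245/10000" "3208/10000"]
      N31 n
    unfolding J_def V_def N_def s_def by (simp add: power2_eq_square)
  have outer_W: "(\<Sum>j\<in>J. W j) \<le> N/10 + 2/75 + 1757/10000 * N * s"
    using sum_inverse_one_plus_cc_minorant_plus_le[of 5 n "t+1" "2*t+1" "2236/1000" "1757/10000"]
      N31 n
    unfolding J_def W_def N_def s_def by (simp add: power2_eq_square)
  have "(\<Sum>j\<in>J. \<Sum>k\<in>J. 1 / (one_plus_cc_minorant n j + neg_cc_minorant n k))
      \<le> (\<Sum>j\<in>J. V j + (1 + s/4) * W j + C)"
    by (intro sum_mono inner)
  also have "\<dots> = (\<Sum>j\<in>J. V j) + (1 + s/4) * (\<Sum>j\<in>J. W j) + (N + 1)/4 * C"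
    using card_J by (simp add: sum.distrib sum_distrib_left)
  also have "\<dots> \<le> (N/3 + 8/27 + 3208/10000 * N * s)
      + (1 + s/4) * (N/10 + 2/75 + 1757/10000 * N * s) + (N + 1)/4 * C"
    using outer_V outer_W s0 by (intro add_right_mono add_mono mult_left_mono) auto
  also have "\<dots> \<le> N^2 * ln N / 16"
    unfolding C_def s_def by (rule quartic_estimate_three_mod_four[OF N31])
  finally show ?thesis unfolding J_def N_def .
qed

section \<open>Small \<open>n\<close>\<close>

lemma le_sq_mult_ln_div_16I:
  fixes S r :: real and n k :: nat
  assumes "S \<le> r" "r \<le> (real n)^2 * (real k * (6931/10000) + (1 - 2^k / real n)) / 16" "n > 0"
  shows "S \<le> (real n)^2 * ln (real n) / 16"
proof -
  have "real k * (6931/10000) \<le> real k * ln 2" using ln2_ge_6931 by (intro mult_left_mono) auto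
  then have "real k * (6931/10000) + (1 - 2^k / real n) \<le> ln (real n)"
    using ln_ge_by_power_of_2[of "real n" k] assms(3) by simp
  then have "(real n)^2 * (real k * (6931/10000) + (1 - 2^k / real n)) / 16 \<le> (real n)^2 * ln (real n) / 16"
    by (intro divide_right_mono mult_left_mono) auto
  then show ?thesis using assms by linarith
qed

lemma double_sum_inverse_minorants_small_one_mod_four:
  assumes "n = 4 * t + 1" "1 \<le> t" "t \<le> 4"
  shows "(\<Sum>j\<in>{t+1..2*t}. \<Sum>k\<in>{t+1..2*t}. 1 / (one_plus_cc_minorant n j + neg_cc_minorant n k))
           \<le> (real n)^2 * ln (real n) / 16"
proof -
  have "t = 1 \<or> t = 2 \<or> t = 3 \<or> t = 4" using assms by auto
  then show ?thesis
  proof (elim disjE)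
    assume t: "t = 1"
    show ?thesis unfolding assms(1) t
      by (intro le_sq_mult_ln_div_16I[where r = "132/100" and k = 2])
        (simp_all add: one_plus_cc_minorant_def neg_cc_minorant_def numeral_eq_Suc)
  next
    assume t: "t = 2"
    show ?thesis unfolding assms(1) t
      by (intro le_sq_mult_ln_div_16I[where r = "593/100" and k = 3])
        (simp_all add: one_plus_cc_minorant_def neg_cc_minorant_def numeral_eq_Suc)
  next
    assume t: "t = 3"
    show ?thesis unfolding assms(1) t
      by (intro le_sq_mult_ln_div_16I[where r = "1419/100" and k = 3])
        (simp_all add: one_plus_cc_minorant_def neg_cc_minorant_def numeral_eq_Suc)
  next
    assume t: "t = 4"
    show ?thesis unfolding assms(1) t
      by (intro le_sq_mult_ln_div_16I[where r = "2625/100" and k = 4])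
        (simp_all add: one_plus_cc_minorant_def neg_cc_minorant_def numeral_eq_Suc)
  qed
qed

lemma double_sum_inverse_minorants_small_three_mod_four:
  assumes "n = 4 * t + 3" "2 \<le> t" "t \<le> 6"
  shows "(\<Sum>j\<in>{t+1..2*t+1}. \<Sum>k\<in>{t+1..2*t+1}. 1 / (one_plus_cc_minorant n j + neg_cc_minorant n k))
           \<le> (real n)^2 * ln (real n) / 16"
proof -
  have "t = 2 \<or> t = 3 \<or> t = 4 \<or> t = 5 \<or> t = 6" using assms by auto
  then show ?thesis
  proof (elim disjE)
    assume t: "t = 2"
    show ?thesis unfolding assms(1) t
      by (intro le_sq_mult_ln_div_16I[where r = "1609/100" and k = 3])
        (simp_all add: one_plus_cc_minorant_def neg_cc_minorant_def numeral_eq_Suc)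
  next
    assume t: "t = 3"
    show ?thesis unfolding assms(1) t
      by (intro le_sq_mult_ln_div_16I[where r = "3021/100" and k = 3])
        (simp_all add: one_plus_cc_minorant_def neg_cc_minorant_def numeral_eq_Suc)
  next
    assume t: "t = 4"
    show ?thesis unfolding assms(1) t
      by (intro le_sq_mult_ln_div_16I[where r = "4878/100" and k = 4])
        (simp_all add: one_plus_cc_minorant_def neg_cc_minorant_def numeral_eq_Suc)
  next
    assume t: "t = 5"
    show ?thesis unfolding assms(1) t
      by (intro le_sq_mult_ln_div_16I[where r = "7179/100" and k = 4])
        (simp_all add: one_plus_cc_minorant_def neg_cc_minorant_def numeral_eq_Suc)
  next
    assume t: "t = 6"
    show ?thesis unfolding assms(1) t
      by (intro le_sq_mult_ln_div_16I[where r = "9927/100" and k = 4])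
        (simp_all add: one_plus_cc_minorant_def neg_cc_minorant_def numeral_eq_Suc)
  qed
qed

lemma one_plus_cc_ge_Taylor:
  assumes "2 * j \<le> n"
  shows "(31415/10000 * (real n - 2 * real j) / real n)^2 / 2
           - (31416/10000 * (real n - 2 * real j) / real n)^4 / 24 \<le> 1 + cc n j"
proof (cases "n = 0")
  case False
  then have n0: "real n > 0" by simp
  define a where "a = real n - 2 * real j"
  define y where "y = pi * a / real n"
  have "2 * pi * real j / real n = pi - y" using n0 unfolding y_def a_def by (simp add: field_simps)
  then have "1 + cc n j = 1 - cos y" unfolding cc_def by simp
  moreover have a0: "0 \<le> a" unfolding a_def using assms by linarith
  then have "31415/10000 * a / real n \<le> y" "y \<le> 31416/10000 * a / real n"
    unfolding y_def using pi_ge_3_1415 pi_le_3_1416 n0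
    by (intro divide_right_mono mult_right_mono; simp)+
  moreover have "0 \<le> 31415/10000 * a / real n" using a0 n0 by simp
  ultimately show ?thesis
    using cos_le_Taylor_4[of y] power_mono[of "31415/10000 * a / real n" y 2]
      power_mono[of y "31416/10000 * a / real n" 4] unfolding a_def by linarith
qed (use assms in \<open>simp add: cc_def\<close>)

lemma neg_cc_ge_Taylor:
  assumes "0 < n" "n \<le> 4 * k"
  shows "31415/10000 * (4 * real k - real n) / (2 * real n)
           - (31416/10000 * (4 * real k - real n) / (2 * real n))^3 / 6 \<le> - cc n k"
proof -
  have n0: "real n > 0" using assms by simp
  define b where "b = 4 * real k - real n"
  define x where "x = pi * b / (2 * real n)"
  have "2 * pi * real k / real n = x + pi/2" using n0 unfolding x_def b_def by (simp add: field_simps)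
  then have "- cc n k = sin x" unfolding cc_def by (simp add: cos_add)
  moreover have b0: "0 \<le> b" unfolding b_def using assms(2) by linarith
  then have "31415/10000 * b / (2 * real n) \<le> x" "x \<le> 31416/10000 * b / (2 * real n)"
    unfolding x_def using pi_ge_3_1415 pi_le_3_1416 n0
    by (intro divide_right_mono mult_right_mono; simp)+
  moreover have "0 \<le> 31415/10000 * b / (2 * real n)" using b0 n0 by simp
  ultimately show ?thesis
    using sin_ge_Taylor_3[of x] power_mono[of x "31416/10000 * b / (2 * real n)" 3]
    unfolding b_def by linarith
qed

text \<open>For \<open>n = 7\<close> the minorants are too weak; the four terms are bounded directly by
  Taylor polynomials instead.\<close>
lemma double_sum_inverse_gap_seven:
  "(\<Sum>j\<in>{2..3::nat}. \<Sum>k\<in>{2..3::nat}. 1 / \<bar>cc 7 j - cc 7 k + 1\<bar>) \<le> (real 7)^2 * ln (real 7) / 16"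
proof (rule le_sq_mult_ln_div_16I[where r = "5737/1000" and k = 3])
  define T where "T j k =
      (31415/10000 * (7 - 2 * real j) / 7)^2 / 2 - (31416/10000 * (7 - 2 * real j) / 7)^4 / 24
      + (31415/10000 * (4 * real k - 7) / 14 - (31416/10000 * (4 * real k - 7) / 14)^3 / 6)"
    for j k :: nat
  have "1 / \<bar>cc 7 j - cc 7 k + 1\<bar> \<le> 1 / T j k" if "j \<in> {2..3}" "k \<in> {2..3}" for j k
  proof (rule divide_left_mono)
    have "T j k \<le> cc 7 j - cc 7 k + 1"
      using one_plus_cc_ge_Taylor[of j 7] neg_cc_ge_Taylor[of 7 k] that unfolding T_def by auto
    moreover have "j \<in> {2, 3}" "k \<in> {2, 3}" using that by auto
    then have "0 < T j k" unfolding T_def by (auto simp: eval_nat_numeral)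
    ultimately show "T j k \<le> \<bar>cc 7 j - cc 7 k + 1\<bar>" "0 < \<bar>cc 7 j - cc 7 k + 1\<bar> * T j k"
      by auto
  qed simp
  then have "(\<Sum>j\<in>{2..3::nat}. \<Sum>k\<in>{2..3::nat}. 1 / \<bar>cc 7 j - cc 7 k + 1\<bar>)
      \<le> (\<Sum>j\<in>{2..3::nat}. \<Sum>k\<in>{2..3::nat}. 1 / T j k)"
    by (intro sum_mono) auto
  also have "\<dots> \<le> 5737/1000" unfolding T_def by (simp add: numeral_eq_Suc)
  finally show "(\<Sum>j\<in>{2..3::nat}. \<Sum>k\<in>{2..3::nat}. 1 / \<bar>cc 7 j - cc 7 k + 1\<bar>) \<le> 5737/1000" .
qed simp_all

lemma nat_ceiling_quarter: "0 < r \<Longrightarrow> r \<le> 4 \<Longrightarrow> nat \<lceil>real (4 * t + r) / 4\<rceil> = t + 1"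
  by (simp add: ceiling_unique[where z = "int (t + 1)"] field_simps)

lemma double_sum_inverse_minorants_le:
  assumes "n \<ge> 5" "odd n" "n \<noteq> 7"
  shows "(\<Sum>j = nat \<lceil>real n / 4\<rceil>..(n - 1) div 2. \<Sum>k = nat \<lceil>real n / 4\<rceil>..(n - 1) div 2.
            1 / (one_plus_cc_minorant n j + neg_cc_minorant n k))
         \<le> (real n)^2 * ln (real n) / 16"
proof -
  define t where "t = n div 4"
  have "n mod 4 = 1 \<or> n mod 4 = 3" using assms(2) by presburger
  then have "n = 4 * t + 1 \<or> n = 4 * t + 3" unfolding t_def by presburger
  then show ?thesis
  proof
    assume n: "n = 4 * t + 1"
    have "nat \<lceil>real n / 4\<rceil> = t + 1" unfolding n by (rule nat_ceiling_quarter) auto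
    moreover have "(n - 1) div 2 = 2 * t" "t \<ge> 1" using n assms(1) by simp_all
    ultimately show ?thesis
      using double_sum_inverse_minorants_one_mod_four[OF _ n]
        double_sum_inverse_minorants_small_one_mod_four[OF n]
      by (cases "t \<ge> 5") auto
  next
    assume n: "n = 4 * t + 3"
    have "nat \<lceil>real n / 4\<rceil> = t + 1" unfolding n by (rule nat_ceiling_quarter) auto
    moreover have "(n - 1) div 2 = 2 * t + 1" "t \<ge> 2" using n assms(1,3) by simp_all
    ultimately show ?thesis
      using double_sum_inverse_minorants_three_mod_four[OF _ n]
        double_sum_inverse_minorants_small_three_mod_four[OF n]
      by (cases "t \<ge> 7") auto
  qed
qed

theorem mainTheorem6:
  fixes n :: nat
  assumes "n \<ge> 5" and "odd n"
  shows "3/2 * (\<Sum>j = nat \<lceil>real n / 4\<rceil>..(n - 1) div 2.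
                 \<Sum>k = nat \<lceil>real n / 4\<rceil>..(n - 1) div 2.
                   1 / \<bar>cc n j - cc n k + 1\<bar>)
         \<le> 3/32 * (real n)^2 * ln (real n)"
proof -
  have "(\<Sum>j = nat \<lceil>real n / 4\<rceil>..(n - 1) div 2. \<Sum>k = nat \<lceil>real n / 4\<rceil>..(n - 1) div 2.
           1 / \<bar>cc n j - cc n k + 1\<bar>) \<le> (real n)^2 * ln (real n) / 16"
  proof (cases "n = 7")
    case True
    have "nat \<lceil>real 7 / 4\<rceil> = 2" using nat_ceiling_quarter[of 3 1] by simp
    then show ?thesis using double_sum_inverse_gap_seven True by simp
  next
    case False
    have "(\<Sum>j = nat \<lceil>real n / 4\<rceil>..(n - 1) div 2. \<Sum>k = nat \<lceil>real n / 4\<rceil>..(n - 1) div 2.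
             1 / \<bar>cc n j - cc n k + 1\<bar>)
        \<le> (\<Sum>j = nat \<lceil>real n / 4\<rceil>..(n - 1) div 2. \<Sum>k = nat \<lceil>real n / 4\<rceil>..(n - 1) div 2.
             1 / (one_plus_cc_minorant n j + neg_cc_minorant n k))"
      using assms by (intro sum_mono inverse_gap_le_inverse_minorants) auto
    then show ?thesis using double_sum_inverse_minorants_le[OF assms False] by linarith
  qed
  then show ?thesis by linarith
qed

end
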